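(* Let $S_1,S_2$ be solids of $\mathrm{PG}(6,q)$ with $\dim(S_1\cap S_2)\le 1$ and let $P$ be a point not contained in $S_1\cup S_2$. Then the number of planes that contain $P$ and meet both $S_1$ and $S_2$ non-trivially is at most $2q^6+2q^5+3q^4+2q^3+2q^2+q+1$.
   Context: Dimensions are projective (planes 2, solids 3). *)

theory Defs
  imports "HOL-Analysis.Analysis"
begin

text \<open>PG(n,q) is modelled via the underlying vector space ('a::{finite,field})^(n+1),
  with q = CARD('a). A projective subspace of projective dimension d is a linear
  subspace of vector dimension d+1 (points: d=0, lines: 1, planes: 2, solids: 3).\<close>

definition proj_subspace :: "nat \<Rightarrow> ('a::field ^ 'n) set \<Rightarrow> bool" where
  "proj_subspace d W \<longleftrightarrow> vec.subspace W \<and> vec.dim W = d + 1"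

end

theory Submission
  imports Defs
begin

text \<open>Let \<open>T\<^sub>i\<close> be the span of \<open>S\<^sub>i\<close> and \<open>P\<close> and \<open>J = T\<^sub>1 \<inter> T\<^sub>2\<close>. Since the solids
  meet in at most a line, \<open>J\<close> is a plane or a solid through \<open>P\<close> meeting each \<open>S\<^sub>i\<close> in a
  subspace of codimension one in \<open>J\<close>. A plane \<open>\<pi>\<close> through \<open>P\<close> either lies in \<open>J\<close>, or meets
  \<open>J\<close> in a line, or meets \<open>J\<close> only in \<open>P\<close>; in the last case the points in which \<open>\<pi>\<close> meets
  \<open>S\<^sub>1\<close> and \<open>S\<^sub>2\<close> lie outside \<open>J\<close> and, together with \<open>P\<close>, determine \<open>\<pi>\<close>. Each class is
  bounded by double counting pairs of vectors that span \<open>\<pi>\<close> together with \<open>P\<close>, and the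
  three bounds add up to at most the claimed polynomial whether \<open>J\<close> is a plane or a solid.\<close>

context finite_dimensional_vector_space
begin

lemma card_subspace:
  assumes "finite (UNIV :: 'a set)" "subspace W"
  shows "card W = CARD('a) ^ dim W"
proof -
  obtain B where B: "finite B" "B \<subseteq> W" "independent B" "span B = W" "card B = dim W"
    using local.basis_subspace_exists[OF assms(2)] by metis
  define f where "f u = (\<Sum>v\<in>B. scale (u v) v)" for u
  have "W = f ` (B \<rightarrow>\<^sub>E UNIV)"
  proof
    show "W \<subseteq> f ` (B \<rightarrow>\<^sub>E UNIV)"
    proof
      fix w assume "w \<in> W"
      then obtain u where u: "w = (\<Sum>v\<in>B. scale (u v) v)"
        using local.span_finite[OF B(1)] B(4) by auto
      have "w = f (restrict u B)" unfolding u f_def by (auto intro: sum.cong)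
      then show "w \<in> f ` (B \<rightarrow>\<^sub>E UNIV)" by auto
    qed
    show "f ` (B \<rightarrow>\<^sub>E UNIV) \<subseteq> W"
      using local.span_finite[OF B(1)] B(4) unfolding f_def by auto
  qed
  moreover have "inj_on f (B \<rightarrow>\<^sub>E UNIV)"
  proof
    fix u u' assume u: "u \<in> B \<rightarrow>\<^sub>E UNIV" and u': "u' \<in> B \<rightarrow>\<^sub>E UNIV" and "f u = f u'"
    then have "(\<Sum>v\<in>B. scale (u v - u' v) v) = 0"
      unfolding f_def by (simp add: scale_left_diff_distrib sum_subtractf)
    then have "\<forall>v\<in>B. u v - u' v = 0"
      using B(3) unfolding local.independent_explicit by (auto dest: spec[where x="\<lambda>v. u v - u' v"])
    then show "u = u'" using u u' by (intro ext) (metis PiE_arb eq_iff_diff_eq_0)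
  qed
  ultimately have "card W = card (B \<rightarrow>\<^sub>E (UNIV :: 'a set))" by (simp add: card_image)
  also have "\<dots> = CARD('a) ^ dim W" using B(1,5) by (simp add: card_PiE)
  finally show ?thesis .
qed

lemma card_subspace_diff:
  assumes "finite (UNIV :: 'a set)" "subspace V" "subspace W" "V \<subseteq> W"
  shows "card (W - V) = CARD('a) ^ dim W - CARD('a) ^ dim V"
proof -
  have "finite V"
    using card_subspace[OF assms(1,2)] assms(1) by (intro card_ge_0_finite) (simp add: finite_UNIV_card_ge_0)
  then show ?thesis
    using card_Diff_subset[OF _ assms(4)] card_subspace[OF assms(1,2)] card_subspace[OF assms(1,3)]
    by simp
qed

lemma card_nonzero_subspace_ge:
  assumes "finite (UNIV :: 'a set)" "subspace W" "W \<noteq> {0}"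
  shows "CARD('a) \<le> card W"
proof -
  have "\<not> W \<subseteq> {0}" using assms(2,3) local.subspace_0 by auto
  then have "dim W \<noteq> 0" using local.dim_eq_0 by blast
  then have "1 \<le> dim W" by linarith
  then have "CARD('a) ^ 1 \<le> CARD('a) ^ dim W"
    using assms(1) by (intro power_increasing) (simp_all add: Suc_le_eq finite_UNIV_card_ge_0)
  then show ?thesis using card_subspace[OF assms(1,2)] by simp
qed

lemma dim_span_Un_Int:
  assumes "subspace A" "subspace B"
  shows "dim (span (A \<union> B)) + dim (A \<inter> B) = dim A + dim B"
  using local.dim_sums_Int[OF assms] assms by (simp add: local.span_Un local.span_eq_iff[THEN iffD2])

lemma span_Un_Int_modular:
  assumes "subspace S" "subspace P" "subspace T" "P \<subseteq> T"
  shows "span (S \<union> P) \<inter> T = span ((S \<inter> T) \<union> P)"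
proof
  show "span (S \<union> P) \<inter> T \<subseteq> span ((S \<inter> T) \<union> P)"
  proof
    fix z assume z: "z \<in> span (S \<union> P) \<inter> T"
    then obtain s y where sy: "z = s + y" "s \<in> S" "y \<in> P"
      using assms(1,2) by (auto simp: local.span_Un local.span_eq_iff[THEN iffD2])
    have "s = z - y" using sy by simp
    then have "s \<in> T" using z sy assms(3,4) local.subspace_diff by blast
    then show "z \<in> span ((S \<inter> T) \<union> P)"
      using sy by (simp add: local.span_add local.span_base)
  qed
  show "span ((S \<inter> T) \<union> P) \<subseteq> span (S \<union> P) \<inter> T"
    using assms(3,4) local.span_mono[of "(S \<inter> T) \<union> P" "S \<union> P"]
      local.span_minimal[of "(S \<inter> T) \<union> P" T] by auto
qed

lemma dim_Int_meet_of_joins: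
  assumes "subspace S" "subspace S'" "subspace P" "S \<inter> P \<subseteq> {0}"
  defines "J \<equiv> span (S \<union> P) \<inter> span (S' \<union> P)"
  shows "dim (S \<inter> J) + dim P = dim J"
proof -
  let ?K = "S \<inter> span (S' \<union> P)"
  have K: "S \<inter> J = ?K" unfolding J_def by (auto intro: local.span_base)
  have J: "J = span (?K \<union> P)"
    unfolding J_def by (rule span_Un_Int_modular) (use assms in \<open>auto intro: local.span_base\<close>)
  have "dim (?K \<inter> P) = 0" using assms(4) local.dim_eq_0 by blast
  moreover have "dim (span (?K \<union> P)) + dim (?K \<inter> P) = dim ?K + dim P"
    using assms(1,3) by (intro dim_span_Un_Int local.subspace_inter local.subspace_span)
  ultimately have "dim ?K + dim P = dim J" unfolding J by linarith
  with K show ?thesis by simp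
qed

end

definition planes_through :: "('a::field ^ 'n) set \<Rightarrow> ('a ^ 'n) set set" where
  "planes_through P = {\<pi>. proj_subspace 2 \<pi> \<and> P \<subseteq> \<pi>}"

lemma subspace_Int_point_subset_zero:
  fixes P S :: "('a::field ^ 'n) set"
  assumes "proj_subspace 0 P" "vec.subspace S" "\<not> P \<subseteq> S"
  shows "S \<inter> P \<subseteq> {0}"
proof -
  have P: "vec.subspace P" "vec.dim P = 1" using assms(1) by (auto simp: proj_subspace_def)
  have "vec.dim (S \<inter> P) \<noteq> 1"
  proof
    assume "vec.dim (S \<inter> P) = 1"
    then have "S \<inter> P = P"
      using vec.subspace_dim_equal[of "S \<inter> P" P] P vec.subspace_inter[OF assms(2) P(1)] by simp
    with assms(3) show False by blast
  qed
  moreover have "vec.dim (S \<inter> P) \<le> 1" using vec.dim_subset[of "S \<inter> P" P] P by simp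
  ultimately have "vec.dim (S \<inter> P) = 0" by linarith
  then show ?thesis by simp
qed

lemma dim_insert_point:
  fixes P :: "('a::field ^ 'n) set"
  assumes "proj_subspace 0 P" "x \<notin> P"
  shows "vec.dim (insert x P) = 2"
  using assms by (simp add: vec.dim_insert proj_subspace_def vec.span_eq_iff[THEN iffD2])

lemma dim_insert_insert_point:
  fixes P :: "('a::field ^ 'n) set"
  assumes "proj_subspace 0 P" "x \<notin> P" "y \<notin> vec.span (insert x P)"
  shows "vec.dim (insert y (insert x P)) = 3"
  unfolding vec.dim_insert[of y "insert x P"] using assms(3) dim_insert_point[OF assms(1,2)] by simp

lemma planes_through_eqI:
  fixes P :: "('a::field ^ 'n) set"
  assumes "proj_subspace 0 P" "\<pi> \<in> planes_through P" "\<pi>' \<in> planes_through P"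
    and "x \<in> \<pi> \<inter> \<pi>'" "y \<in> \<pi> \<inter> \<pi>'" "x \<notin> P" "y \<notin> vec.span (insert x P)"
  shows "\<pi> = \<pi>'"
proof -
  let ?B = "insert y (insert x P)"
  have "\<sigma> = vec.span ?B" if "\<sigma> \<in> planes_through P" "x \<in> \<sigma>" "y \<in> \<sigma>" for \<sigma>
    using vec.dim_eq_span[of ?B \<sigma>] that dim_insert_insert_point[OF assms(1,6,7)]
    by (simp add: planes_through_def proj_subspace_def vec.span_eq_iff[THEN iffD2])
  then show ?thesis using assms(2-5) by (metis IntD1 IntD2)
qed

lemma card_point_pairs_spanning_plane:
  fixes W P :: "('a::{finite,field} ^ 'n) set"
  assumes "vec.subspace W" "proj_subspace 0 P" "P \<subseteq> W"
  shows "card (SIGMA x:W - P. W - vec.span (insert x P))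
    = (CARD('a) ^ vec.dim W - CARD('a)) * (CARD('a) ^ vec.dim W - CARD('a)^2)"
proof -
  have P: "vec.subspace P" "vec.dim P = 1" using assms(2) by (auto simp: proj_subspace_def)
  have line: "card (W - vec.span (insert x P)) = CARD('a) ^ vec.dim W - CARD('a)^2"
    if "x \<in> W - P" for x
  proof -
    have "vec.span (insert x P) \<subseteq> W" using that assms(1,3) by (intro vec.span_minimal) auto
    then show ?thesis
      using vec.card_subspace_diff[OF finite vec.subspace_span assms(1)]
        dim_insert_point[OF assms(2)] that
      by simp
  qed
  have "card (SIGMA x:W - P. W - vec.span (insert x P))
      = (\<Sum>x\<in>W - P. card (W - vec.span (insert x P)))"
    by (rule card_SigmaI) simp_all
  also have "\<dots> = card (W - P) * (CARD('a) ^ vec.dim W - CARD('a)^2)"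
    using line by simp
  also have "card (W - P) = CARD('a) ^ vec.dim W - CARD('a)"
    using vec.card_subspace_diff[OF finite P(1) assms(1,3)] P(2) by simp
  finally show ?thesis .
qed

lemma card_mult_le_card_if_disjoint_fibres:
  assumes "finite D" "\<And>x. x \<in> N \<Longrightarrow> F x \<subseteq> D"
    and "\<And>x y. x \<in> N \<Longrightarrow> y \<in> N \<Longrightarrow> F x \<inter> F y \<noteq> {} \<Longrightarrow> x = y"
    and "\<And>x. x \<in> N \<Longrightarrow> k \<le> card (F x)"
  shows "card N * k \<le> card D"
proof (cases "finite N")
  case True
  have "card N * k \<le> (\<Sum>x\<in>N. card (F x))"
    using sum_mono[of N "\<lambda>_. k"] assms(4) by simp
  also have "\<dots> = card (\<Union>x\<in>N. F x)"
  proof (rule card_UN_disjoint[symmetric])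
    show "\<forall>x\<in>N. finite (F x)" using assms(1,2) finite_subset by blast
    show "\<forall>x\<in>N. \<forall>y\<in>N. x \<noteq> y \<longrightarrow> F x \<inter> F y = {}" using assms(3) by blast
  qed (rule True)
  also have "\<dots> \<le> card D" using assms(1,2) by (intro card_mono) auto
  finally show ?thesis .
qed simp

lemma card_planes_through_point_in_subspace:
  fixes J P :: "('a::{finite,field} ^ 'n) set"
  assumes "vec.subspace J" "proj_subspace 0 P" "P \<subseteq> J"
  shows "card {\<pi> \<in> planes_through P. \<pi> \<subseteq> J} * ((CARD('a)^3 - CARD('a)) * (CARD('a)^3 - CARD('a)^2))
    \<le> (CARD('a) ^ vec.dim J - CARD('a)) * (CARD('a) ^ vec.dim J - CARD('a)^2)"
proof -
  define F where "F \<pi> = (SIGMA x:\<pi> - P. \<pi> - vec.span (insert x P))" for \<pi>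
  have "card {\<pi> \<in> planes_through P. \<pi> \<subseteq> J} * ((CARD('a)^3 - CARD('a)) * (CARD('a)^3 - CARD('a)^2))
    \<le> card (F J)"
  proof (rule card_mult_le_card_if_disjoint_fibres[where F=F])
    fix \<pi> assume "\<pi> \<in> {\<pi> \<in> planes_through P. \<pi> \<subseteq> J}"
    then have \<pi>: "vec.subspace \<pi>" "vec.dim \<pi> = 3" "P \<subseteq> \<pi>" "\<pi> \<subseteq> J"
      by (auto simp: planes_through_def proj_subspace_def)
    show "F \<pi> \<subseteq> F J" using \<pi>(4) unfolding F_def by auto
    show "(CARD('a)^3 - CARD('a)) * (CARD('a)^3 - CARD('a)^2) \<le> card (F \<pi>)"
      using card_point_pairs_spanning_plane[OF \<pi>(1) assms(2) \<pi>(3)] \<pi>(2) unfolding F_def by simp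
  next
    fix \<pi> \<pi>' assume \<pi>: "\<pi> \<in> {\<pi> \<in> planes_through P. \<pi> \<subseteq> J}"
      and \<pi>': "\<pi>' \<in> {\<pi> \<in> planes_through P. \<pi> \<subseteq> J}" and meet: "F \<pi> \<inter> F \<pi>' \<noteq> {}"
    from meet obtain x y where "x \<in> \<pi> \<inter> \<pi>' - P" "y \<in> \<pi> \<inter> \<pi>' - vec.span (insert x P)"
      unfolding F_def by blast
    with \<pi> \<pi>' assms(2) show "\<pi> = \<pi>'" by (intro planes_through_eqI[of P \<pi> \<pi>' x y]) auto
  qed simp
  then show ?thesis using card_point_pairs_spanning_plane[OF assms] unfolding F_def by simp
qed

lemma card_planes_through_point_meeting_subspace_in_line:
  fixes J P :: "('a::{finite,field} ^ 'n) set"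
  assumes "vec.subspace J" "proj_subspace 0 P" "P \<subseteq> J"
  shows "card {\<pi> \<in> planes_through P. \<not> \<pi> \<subseteq> J \<and> \<pi> \<inter> J \<noteq> P}
      * ((CARD('a)^2 - CARD('a)) * (CARD('a)^3 - CARD('a)^2))
    \<le> (CARD('a) ^ vec.dim J - CARD('a)) * (CARD('a) ^ CARD('n) - CARD('a) ^ vec.dim J)"
proof -
  have P: "vec.subspace P" "vec.dim P = 1" using assms(2) by (auto simp: proj_subspace_def)
  define F where "F \<pi> = (\<pi> \<inter> J - P) \<times> (\<pi> - J)" for \<pi>
  have "card {\<pi> \<in> planes_through P. \<not> \<pi> \<subseteq> J \<and> \<pi> \<inter> J \<noteq> P}
      * ((CARD('a)^2 - CARD('a)) * (CARD('a)^3 - CARD('a)^2)) \<le> card ((J - P) \<times> (UNIV - J))"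
  proof (rule card_mult_le_card_if_disjoint_fibres[where F=F])
    fix \<pi> assume "\<pi> \<in> {\<pi> \<in> planes_through P. \<not> \<pi> \<subseteq> J \<and> \<pi> \<inter> J \<noteq> P}"
    then have \<pi>: "vec.subspace \<pi>" "vec.dim \<pi> = 3" "P \<subseteq> \<pi>" "\<not> \<pi> \<subseteq> J" "\<pi> \<inter> J \<noteq> P"
      by (auto simp: planes_through_def proj_subspace_def)
    show "F \<pi> \<subseteq> (J - P) \<times> (UNIV - J)" unfolding F_def by auto
    have L: "vec.subspace (\<pi> \<inter> J)" "P \<subseteq> \<pi> \<inter> J" using \<pi> assms by (auto intro: vec.subspace_inter)
    have "vec.dim P < vec.dim (\<pi> \<inter> J)"
      using vec.dim_subset[OF L(2)] vec.subspace_dim_equal[OF P(1) L] \<pi>(5) by fastforce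
    moreover have "vec.dim (\<pi> \<inter> J) < vec.dim \<pi>"
      using vec.dim_subset[of "\<pi> \<inter> J" \<pi>] vec.subspace_dim_equal[OF L(1) \<pi>(1)] \<pi>(4) by fastforce
    ultimately have "vec.dim (\<pi> \<inter> J) = 2" using P(2) \<pi>(2) by linarith
    moreover have "\<pi> - J = \<pi> - \<pi> \<inter> J" by blast
    ultimately show "(CARD('a)^2 - CARD('a)) * (CARD('a)^3 - CARD('a)^2) \<le> card (F \<pi>)"
      using vec.card_subspace_diff[OF finite P(1) L] vec.card_subspace_diff[OF finite L(1) \<pi>(1)]
        P(2) \<pi>(2)
      unfolding F_def by (simp add: card_cartesian_product)
  next
    fix \<pi> \<pi>'
    assume \<pi>: "\<pi> \<in> {\<pi> \<in> planes_through P. \<not> \<pi> \<subseteq> J \<and> \<pi> \<inter> J \<noteq> P}"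
      and \<pi>': "\<pi>' \<in> {\<pi> \<in> planes_through P. \<not> \<pi> \<subseteq> J \<and> \<pi> \<inter> J \<noteq> P}" and meet: "F \<pi> \<inter> F \<pi>' \<noteq> {}"
    from meet obtain x y where xy: "x \<in> \<pi> \<inter> \<pi>' \<inter> J - P" "y \<in> \<pi> \<inter> \<pi>' - J"
      unfolding F_def by blast
    have "vec.span (insert x P) \<subseteq> J" using xy assms(1,3) by (intro vec.span_minimal) auto
    with xy \<pi> \<pi>' assms(2) show "\<pi> = \<pi>'" by (intro planes_through_eqI[of P \<pi> \<pi>' x y]) auto
  qed simp
  also have "\<dots> = (CARD('a) ^ vec.dim J - CARD('a)) * (CARD('a) ^ CARD('n) - CARD('a) ^ vec.dim J)"
    using vec.card_subspace_diff[OF finite P(1) assms(1,3)] vec.card_subspace[OF finite assms(1)] P(2)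
    by (simp add: card_cartesian_product card_Diff_subset)
  finally show ?thesis .
qed

lemma card_planes_through_point_meeting_two_subspaces:
  fixes A B T U P :: "('a::{finite,field} ^ 'n) set"
  assumes "vec.subspace A" "vec.subspace B" "vec.subspace T" "vec.subspace U" "proj_subspace 0 P"
    and "P \<subseteq> T" "A \<subseteq> T" "B \<subseteq> U" "A \<inter> P \<subseteq> {0}" "B \<inter> P \<subseteq> {0}"
  shows "card {\<pi> \<in> planes_through P. \<pi> \<inter> (T \<inter> U) = P \<and> \<pi> \<inter> A \<noteq> {0} \<and> \<pi> \<inter> B \<noteq> {0}}
      * ((CARD('a) - 1) * (CARD('a) - 1))
    \<le> (CARD('a) ^ vec.dim A - CARD('a) ^ vec.dim (A \<inter> (T \<inter> U)))
      * (CARD('a) ^ vec.dim B - CARD('a) ^ vec.dim (B \<inter> (T \<inter> U)))"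
proof -
  define F where "F \<pi> = (\<pi> \<inter> A - {0}) \<times> (\<pi> \<inter> B - {0})" for \<pi>
  have "card {\<pi> \<in> planes_through P. \<pi> \<inter> (T \<inter> U) = P \<and> \<pi> \<inter> A \<noteq> {0} \<and> \<pi> \<inter> B \<noteq> {0}}
      * ((CARD('a) - 1) * (CARD('a) - 1)) \<le> card ((A - T \<inter> U) \<times> (B - T \<inter> U))"
  proof (rule card_mult_le_card_if_disjoint_fibres[where F=F])
    fix \<pi>
    assume "\<pi> \<in> {\<pi> \<in> planes_through P. \<pi> \<inter> (T \<inter> U) = P \<and> \<pi> \<inter> A \<noteq> {0} \<and> \<pi> \<inter> B \<noteq> {0}}"
    then have \<pi>: "vec.subspace \<pi>" "\<pi> \<inter> (T \<inter> U) = P" "\<pi> \<inter> A \<noteq> {0}" "\<pi> \<inter> B \<noteq> {0}"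
      by (auto simp: planes_through_def proj_subspace_def)
    have "\<pi> \<inter> A \<inter> (T \<inter> U) \<subseteq> {0}" "\<pi> \<inter> B \<inter> (T \<inter> U) \<subseteq> {0}"
      using \<pi>(2) assms(9,10) by auto
    then show "F \<pi> \<subseteq> (A - T \<inter> U) \<times> (B - T \<inter> U)" unfolding F_def by auto
    have "CARD('a) - 1 \<le> card (\<pi> \<inter> C - {0})" if "vec.subspace C" "\<pi> \<inter> C \<noteq> {0}" for C
    proof -
      have "CARD('a) - 1 \<le> card (\<pi> \<inter> C) - card {0 :: 'a ^ 'n}"
        using vec.card_nonzero_subspace_ge[OF finite vec.subspace_inter[OF \<pi>(1) that(1)] that(2)]
        by simp
      also have "\<dots> \<le> card (\<pi> \<inter> C - {0})" by (rule diff_card_le_card_Diff) simp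
      finally show ?thesis .
    qed
    then show "(CARD('a) - 1) * (CARD('a) - 1) \<le> card (F \<pi>)"
      using \<pi> assms(1,2) unfolding F_def by (simp add: card_cartesian_product mult_le_mono)
  next
    fix \<pi> \<pi>'
    assume \<pi>: "\<pi> \<in> {\<pi> \<in> planes_through P. \<pi> \<inter> (T \<inter> U) = P \<and> \<pi> \<inter> A \<noteq> {0} \<and> \<pi> \<inter> B \<noteq> {0}}"
      and \<pi>': "\<pi>' \<in> {\<pi> \<in> planes_through P. \<pi> \<inter> (T \<inter> U) = P \<and> \<pi> \<inter> A \<noteq> {0} \<and> \<pi> \<inter> B \<noteq> {0}}"
      and meet: "F \<pi> \<inter> F \<pi>' \<noteq> {}"
    from meet obtain x y where xy: "x \<in> \<pi> \<inter> \<pi>' \<inter> A - {0}" "y \<in> \<pi> \<inter> \<pi>' \<inter> B - {0}"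
      unfolding F_def by blast
    have "y \<notin> T \<inter> U"
    proof
      assume "y \<in> T \<inter> U"
      then have "y \<in> B \<inter> P" using xy \<pi> by auto
      with xy assms(10) show False by auto
    qed
    moreover have "vec.span (insert x P) \<subseteq> T" using xy assms(3,6,7) by (intro vec.span_minimal) auto
    ultimately have "y \<notin> vec.span (insert x P)" using xy assms(8) by auto
    with xy \<pi> \<pi>' assms(5,9) show "\<pi> = \<pi>'" by (intro planes_through_eqI[of P \<pi> \<pi>' x y]) auto
  qed simp
  also have "\<dots> = (CARD('a) ^ vec.dim A - CARD('a) ^ vec.dim (A \<inter> (T \<inter> U)))
      * (CARD('a) ^ vec.dim B - CARD('a) ^ vec.dim (B \<inter> (T \<inter> U)))"
  proof -
    have TU: "vec.subspace (T \<inter> U)" using assms(3,4) by (rule vec.subspace_inter)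
    have "C - T \<inter> U = C - C \<inter> (T \<inter> U)" for C :: "('a ^ 'n) set" by blast
    then show ?thesis
      using vec.card_subspace_diff[OF finite vec.subspace_inter[OF assms(1) TU] assms(1)]
        vec.card_subspace_diff[OF finite vec.subspace_inter[OF assms(2) TU] assms(2)]
      by (simp add: card_cartesian_product)
  qed
  finally show ?thesis .
qed

lemma dim_meet_of_joins_of_solids:
  fixes S1 S2 P :: "('a::field ^ 'n) set"
  assumes "proj_subspace 3 S1" "proj_subspace 3 S2" "vec.dim (S1 \<inter> S2) \<le> 2" "proj_subspace 0 P"
    and "S1 \<inter> P \<subseteq> {0}" "S2 \<inter> P \<subseteq> {0}"
  defines "J \<equiv> vec.span (S1 \<union> P) \<inter> vec.span (S2 \<union> P)"
  shows "vec.dim (S1 \<inter> J) + 1 = vec.dim J" "vec.dim (S2 \<inter> J) + 1 = vec.dim J"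
    and "vec.dim J \<le> 4" "10 \<le> vec.dim J + CARD('n)"
proof -
  have S: "vec.subspace S1" "vec.dim S1 = 4" "vec.subspace S2" "vec.dim S2 = 4"
    and P: "vec.subspace P" "vec.dim P = 1"
    using assms(1,2,4) by (auto simp: proj_subspace_def)
  have "vec.dim (S1 \<inter> P) = 0" "vec.dim (S2 \<inter> P) = 0" using assms(5,6) by simp_all
  then have T: "vec.dim (vec.span (S1 \<union> P)) = 5" "vec.dim (vec.span (S2 \<union> P)) = 5"
    using vec.dim_span_Un_Int[OF S(1) P(1)] vec.dim_span_Un_Int[OF S(3) P(1)] S(2,4) P(2)
    by linarith+
  show S1J: "vec.dim (S1 \<inter> J) + 1 = vec.dim J"
    using vec.dim_Int_meet_of_joins[OF S(1,3) P(1) assms(5)] P(2) unfolding J_def by simp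
  show "vec.dim (S2 \<inter> J) + 1 = vec.dim J"
    using vec.dim_Int_meet_of_joins[OF S(3,1) P(1) assms(6)] P(2) unfolding J_def
    by (simp add: Int_commute)
  have "S1 \<inter> J = S1 \<inter> vec.span (S2 \<union> P)" unfolding J_def by (auto intro: vec.span_base)
  then have "vec.dim (S1 \<inter> J) = vec.dim (S1 \<inter> vec.span (S2 \<union> P))" by simp
  moreover have "vec.dim (vec.span (S1 \<union> S2)) \<le> vec.dim (vec.span (S1 \<union> vec.span (S2 \<union> P)))"
    by (intro vec.dim_subset vec.span_mono) (auto intro: vec.span_base)
  ultimately show "vec.dim J \<le> 4"
    using vec.dim_span_Un_Int[OF S(1,3)] vec.dim_span_Un_Int[OF S(1) vec.subspace_span, of "S2 \<union> P"]
      S1J S T(2) assms(3) by linarith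
  show "10 \<le> vec.dim J + CARD('n)"
    using vec.dim_span_Un_Int[OF vec.subspace_span vec.subspace_span, of "S1 \<union> P" "S2 \<union> P"] T
      dim_subset_UNIV_cart_gen[of "vec.span (vec.span (S1 \<union> P) \<union> vec.span (S2 \<union> P))"]
    unfolding J_def by linarith
qed

lemma plane_count_polynomial_bound:
  fixes q x1 x2 y :: int and d :: nat
  assumes "2 \<le> q" "d = 3 \<or> d = 4"
    and x1: "x1 * ((q^3 - q) * (q^3 - q^2)) \<le> (q^d - q) * (q^d - q^2)"
    and x2: "x2 * ((q^2 - q) * (q^3 - q^2)) \<le> (q^d - q) * (q^7 - q^d)"
    and y: "y * ((q - 1) * (q - 1)) \<le> (q^4 - q^(d - 1)) * (q^4 - q^(d - 1))"
  shows "x1 + x2 + y \<le> 2*q^6 + 2*q^5 + 3*q^4 + 2*q^3 + 2*q^2 + q + 1"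
proof -
  define c where "c = (q - 1) * (q - 1)"
  have c: "0 < c" using assms(1) by (simp add: c_def)
  have "(q^3 - q) * (q^3 - q^2) = (q^3 * (q + 1)) * c" "(q^2 - q) * (q^3 - q^2) = q^3 * c"
    unfolding c_def by algebra+
  then have x1: "x1 * (q^3 * (q + 1)) * c \<le> (q^d - q) * (q^d - q^2)"
    and x2: "x2 * q^3 * c \<le> (q^d - q) * (q^7 - q^d)" and y: "y * c \<le> (q^4 - q^(d - 1)) * (q^4 - q^(d - 1))"
    using x1 x2 y unfolding c_def by (simp_all add: mult.assoc)
  have q3: "0 < q^3 * (q + 1)" "0 < q^3" using assms(1) by simp_all
  from assms(2) show ?thesis
  proof
    assume "d = 3"
    then have "x1 * (q^3 * (q + 1)) * c \<le> 1 * (q^3 * (q + 1)) * c"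
      and "x2 * q^3 * c \<le> (q * (q + 1) * (q^3 + q^2 + q + 1)) * q^3 * c"
      and "y * c \<le> (q^4 * (q + 1) * (q + 1)) * c"
      using x1 x2 y unfolding c_def by (simp_all add: algebra_simps power_numeral_reduce)
    then have "x1 \<le> 1" "x2 \<le> q * (q + 1) * (q^3 + q^2 + q + 1)" "y \<le> q^4 * (q + 1) * (q + 1)"
      using c q3 by (simp_all add: mult_le_cancel_right_pos mult.assoc)
    moreover have "0 \<le> q^5 * (q - 1)" using assms(1) by simp
    ultimately show ?thesis by (simp add: algebra_simps power_numeral_reduce)
  next
    assume "d = 4"
    then have "x1 * (q^3 * (q + 1)) * c \<le> (q^2 + q + 1) * (q^3 * (q + 1)) * c"
      and "x2 * q^3 * c \<le> (q^2 * (q^2 + q + 1) * (q^2 + q + 1)) * q^3 * c"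
      and "y * c \<le> q^6 * c"
      using x1 x2 y unfolding c_def by (simp_all add: algebra_simps power_numeral_reduce)
    then have "x1 \<le> q^2 + q + 1" "x2 \<le> q^2 * (q^2 + q + 1) * (q^2 + q + 1)" "y \<le> q^6"
      using c q3 by (simp_all add: mult_le_cancel_right_pos mult.assoc)
    then show ?thesis by (simp add: algebra_simps power_numeral_reduce)
  qed
qed

lemma plane_count_polynomial_bound_nat:
  fixes q x1 x2 y d e e' :: nat
  assumes q: "2 \<le> q" and d: "d = 3 \<or> d = 4"
    and x1: "x1 * ((q^3 - q) * (q^3 - q^2)) \<le> (q^d - q) * (q^d - q^2)"
    and x2: "x2 * ((q^2 - q) * (q^3 - q^2)) \<le> (q^d - q) * (q^7 - q^d)"
    and y: "y * ((q - 1) * (q - 1)) \<le> (q^4 - q^e) * (q^4 - q^e')" and e: "e + 1 = d" "e' + 1 = d"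
  shows "x1 + x2 + y \<le> 2*q^6 + 2*q^5 + 3*q^4 + 2*q^3 + 2*q^2 + q + 1"
proof -
  have "e = d - 1" "e' = d - 1" using e by auto
  with y have y: "y * ((q - 1) * (q - 1)) \<le> (q^4 - q^(d - 1)) * (q^4 - q^(d - 1))" by simp
  have pow: "int (q^b - q^a) = int q^b - int q^a" if "a \<le> b" for a b
    using power_increasing[OF that, of q] q by (simp add: of_nat_diff)
  have pow1: "int (q^b - q) = int q^b - int q" if "1 \<le> b" for b
    using pow[OF that] by simp
  have side: "d - 1 \<le> 4" "1 \<le> d" "2 \<le> d" "d \<le> 7" "1 \<le> q" using d q by auto
  have "int (x1 * ((q^3 - q) * (q^3 - q^2))) \<le> int ((q^d - q) * (q^d - q^2))"
    and "int (x2 * ((q^2 - q) * (q^3 - q^2))) \<le> int ((q^d - q) * (q^7 - q^d))"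
    and "int (y * ((q - 1) * (q - 1))) \<le> int ((q^4 - q^(d - 1)) * (q^4 - q^(d - 1)))"
    using x1 x2 y by (simp_all only: of_nat_le_iff)
  then have "int x1 + int x2 + int y
      \<le> 2*int q^6 + 2*int q^5 + 3*int q^4 + 2*int q^3 + 2*int q^2 + int q + 1"
    using q d side by (intro plane_count_polynomial_bound[where d=d]) (simp_all add: pow pow1 of_nat_diff)
  then have "int (x1 + x2 + y) \<le> int (2*q^6 + 2*q^5 + 3*q^4 + 2*q^3 + 2*q^2 + q + 1)" by simp
  then show ?thesis by (simp only: of_nat_le_iff)
qed

theorem lemma4p4:
  fixes S1 S2 P :: "('a::{finite,field} ^ 7) set"
  assumes "proj_subspace 3 S1" and "proj_subspace 3 S2"
    and "vec.dim (S1 \<inter> S2) \<le> 1 + 1"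
    and "proj_subspace 0 P"
    and "\<not> P \<subseteq> S1 \<union> S2"
  shows "card {\<pi>. proj_subspace 2 \<pi> \<and> P \<subseteq> \<pi> \<and> \<pi> \<inter> S1 \<noteq> {0} \<and> \<pi> \<inter> S2 \<noteq> {0}}
    \<le> 2 * CARD('a)^6 + 2 * CARD('a)^5 + 3 * CARD('a)^4 + 2 * CARD('a)^3 + 2 * CARD('a)^2 + CARD('a) + 1"
proof -
  define T1 where "T1 = vec.span (S1 \<union> P)"
  define T2 where "T2 = vec.span (S2 \<union> P)"
  define J where "J = T1 \<inter> T2"
  have S: "vec.subspace S1" "vec.subspace S2" "vec.dim S1 = 4" "vec.dim S2 = 4"
    using assms(1,2) by (auto simp: proj_subspace_def)
  have SP: "S1 \<inter> P \<subseteq> {0}" "S2 \<inter> P \<subseteq> {0}"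
    using subspace_Int_point_subset_zero[OF assms(4)] S(1,2) assms(5) by auto
  have "vec.dim (S1 \<inter> S2) \<le> 2" using assms(3) by simp
  note dimJ = dim_meet_of_joins_of_solids[OF assms(1,2) this assms(4) SP, folded T1_def T2_def J_def]
  have T: "vec.subspace T1" "vec.subspace T2" "P \<subseteq> T1" "S1 \<subseteq> T1" "S2 \<subseteq> T2"
    unfolding T1_def T2_def by (auto intro: vec.span_base)
  have J: "vec.subspace J" "P \<subseteq> J"
    using T unfolding J_def T2_def by (auto intro: vec.subspace_inter vec.span_base)
  have "card {\<pi>. proj_subspace 2 \<pi> \<and> P \<subseteq> \<pi> \<and> \<pi> \<inter> S1 \<noteq> {0} \<and> \<pi> \<inter> S2 \<noteq> {0}}
      \<le> card {\<pi> \<in> planes_through P. \<pi> \<subseteq> J}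
        + card {\<pi> \<in> planes_through P. \<not> \<pi> \<subseteq> J \<and> \<pi> \<inter> J \<noteq> P}
        + card {\<pi> \<in> planes_through P. \<pi> \<inter> J = P \<and> \<pi> \<inter> S1 \<noteq> {0} \<and> \<pi> \<inter> S2 \<noteq> {0}}"
    (is "card ?N \<le> card ?X1 + card ?X2 + card ?Y")
  proof -
    have "?N \<subseteq> ?X1 \<union> ?X2 \<union> ?Y" by (auto simp: planes_through_def)
    then have "card ?N \<le> card (?X1 \<union> ?X2 \<union> ?Y)" by (intro card_mono) simp_all
    then show ?thesis using card_Un_le[of "?X1 \<union> ?X2" ?Y] card_Un_le[of ?X1 ?X2] by linarith
  qed
  also have "\<dots> \<le> 2 * CARD('a)^6 + 2 * CARD('a)^5 + 3 * CARD('a)^4 + 2 * CARD('a)^3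
      + 2 * CARD('a)^2 + CARD('a) + 1"
  proof (rule plane_count_polynomial_bound_nat[where d = "vec.dim J" and e = "vec.dim (S1 \<inter> J)"
        and e' = "vec.dim (S2 \<inter> J)"])
    show "2 \<le> CARD('a)" using card_mono[of UNIV "{0::'a, 1}"] by simp
    show "vec.dim J = 3 \<or> vec.dim J = 4" using dimJ(3,4) by auto
    show "card ?X2 * ((CARD('a)^2 - CARD('a)) * (CARD('a)^3 - CARD('a)^2))
        \<le> (CARD('a) ^ vec.dim J - CARD('a)) * (CARD('a)^7 - CARD('a) ^ vec.dim J)"
      using card_planes_through_point_meeting_subspace_in_line[OF J(1) assms(4) J(2)] by simp
    show "card ?Y * ((CARD('a) - 1) * (CARD('a) - 1))
        \<le> (CARD('a)^4 - CARD('a) ^ vec.dim (S1 \<inter> J)) * (CARD('a)^4 - CARD('a) ^ vec.dim (S2 \<inter> J))"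
      using card_planes_through_point_meeting_two_subspaces[OF S(1,2) T(1,2) assms(4) T(3-5) SP]
      unfolding J_def S(3,4) .
  qed (fact card_planes_through_point_in_subspace[OF J(1) assms(4) J(2)] dimJ(1,2))+
  finally show ?thesis .
qed

end
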